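(* Fix $p_q\in(0,1)$ and $p_a\in[0,1]$, and let $\mu_p = f_{pd}+p_a f_{ps}(1-f_{pd})$. Under the randomized service cooperative policy with probabilistic relaying described in the context, all three queues $Q_p$, $Q_{sp}$, $Q_s$ are stable if and only if $(\lambda_p,\lambda_s)$ (with $\lambda_p,\lambda_s\ge 0$) belongs to $$\mathbf{R}(p_q,p_a)=\Big\{(\lambda_p,\lambda_s):\ \lambda_s< p_q f_{sd}\Big[1-\frac{\lambda_p}{f_{pd}+p_a f_{ps}(1-f_{pd})}\Big],\ \ \lambda_p<\frac{f_{sd}(1-p_q)\,[f_{pd}+p_a f_{ps}(1-f_{pd})]}{f_{sd}(1-p_q)+p_a f_{ps}(1-f_{pd})}\Big\}.$$ Equivalently: $Q_p$ is served at rate $\mu_p$; $Q_{sp}$ is stable iff $p_a f_{ps}(1-f_{pd})\frac{\lambda_p}{\mu_p}<\big(1-\frac{\lambda_p}{\mu_p}\big)(1-p_q)f_{sd}$; $Q_s$ is stable iff $\lambda_s<p_q f_{sd}\big(1-\frac{\lambda_p}{\mu_p}\big)$; and the condition for $Q_{sp}$ implies $\lambda_p<\mu_p$.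
   Context: Cognitive radio system in slotted time with a primary user (PU), a secondary user (SU) and a common destination. Packets arrive at the PU queue $Q_p$ according to a Bernoulli process of rate $\lambda_p\in[0,1]$ and at the SU own-data queue $Q_s$ according to an independent Bernoulli process of rate $\lambda_s\in[0,1]$, i.i.d. across slots. The SU also keeps a relay queue $Q_{sp}$ for PU packets. All buffers are infinite. Each queue evolves as $Q_k^{t+1}=[Q_k^t-Y_k^t]^+ + X_k^t$, $k\in\{p,sp,s\}$, where $X_k^t,Y_k^t\in\{0,1\}$ are arrivals and departures in slot $t$. Link success probabilities (constants in $(0,1)$, independent across slots and links): PU→destination $f_{pd}$, SU→destination $f_{sd}$, PU→SU $f_{ps}$, with $f_{pd}<f_{sd}$. Policy with parameters $p_q\in(0,1)$ (queue-selection probability) and $p_a\in[0,1]$ (admission probability): (1) whenever $Q_p$ is nonempty the PU transmits its head packet and the SU stays silent; (2) if the destination receives it, it leaves the system; (3) otherwise, if the SU decodes it (prob. $f_{ps}$), it is admitted to $Q_{sp}$ with probability $p_a$ (and removed from $Q_p$), else discarded by the SU; (4) if neither received by the destination nor admitted to $Q_{sp}$, it stays in $Q_p$; (5) when $Q_p$ is empty, the SU selects $Q_s$ with probability $p_q$ or $Q_{sp}$ with probability $1-p_q$; if the selected queue is nonempty its head packet is transmitted and leaves upon success (prob. $f_{sd}$), else stays; if the selected queue is empty the slot is idle (even if the other queue is nonempty). ACKs are instantaneous and error-free; sensing is perfect. A queue is stable if its length does not grow unboundedly (e.g., it has a stationary distribution; by Loynes' theorem, arrival rate strictly less than service rate).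 *)

theory Defs
  imports "HOL-Probability.Probability"
begin

text \<open>System state: (length of Q_p, length of Q_sp, length of Q_s).\<close>
type_synonym qstate = "nat \<times> nat \<times> nat"

text \<open>Parameters: lp = lambda_p, ls = lambda_s, fpd, fsd, fps, pq, pa.
  Queue update: Q' = [Q - Y]^+ + X (departure first, then arrival).\<close>
definition slot ::
  "real \<Rightarrow> real \<Rightarrow> real \<Rightarrow> real \<Rightarrow> real \<Rightarrow> real \<Rightarrow> real \<Rightarrow> qstate \<Rightarrow> qstate pmf" where
  "slot lp ls fpd fsd fps pq pa s =
     (case s of (qp, qsp, qs) \<Rightarrow>
      bind_pmf (bernoulli_pmf lp) (\<lambda>xp.
      bind_pmf (bernoulli_pmf ls) (\<lambda>xs.
      let ap = (if xp then 1 else 0 :: nat); as = (if xs then 1 else 0 :: nat) in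
      if qp > 0 then
        bind_pmf (bernoulli_pmf fpd) (\<lambda>d.
          if d then return_pmf (qp - 1 + ap, qsp, qs + as)
          else bind_pmf (bernoulli_pmf fps) (\<lambda>r.
               bind_pmf (bernoulli_pmf pa) (\<lambda>adm.
                 if r \<and> adm then return_pmf (qp - 1 + ap, qsp + 1, qs + as)
                 else return_pmf (qp + ap, qsp, qs + as))))
      else
        bind_pmf (bernoulli_pmf pq) (\<lambda>sel.
        bind_pmf (bernoulli_pmf fsd) (\<lambda>succ.
          if sel then
            return_pmf (ap, qsp, qs - (if qs > 0 \<and> succ then 1 else 0) + as)
          else
            return_pmf (ap, qsp - (if qsp > 0 \<and> succ then 1 else 0), qs + as))))))"

definition state_dist ::
  "real \<Rightarrow> real \<Rightarrow> real \<Rightarrow> real \<Rightarrow> real \<Rightarrow> real \<Rightarrow> real \<Rightarrow> nat \<Rightarrow> qstate pmf" where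
  "state_dist lp ls fpd fsd fps pq pa t =
     ((\<lambda>M. bind_pmf M (slot lp ls fpd fsd fps pq pa)) ^^ t) (return_pmf (0, 0, 0))"

text \<open>A queue (given by a projection of the state) is stable if its length does not
  grow unboundedly: the family of its length distributions over all slots is tight.\<close>
definition queue_stable :: "(nat \<Rightarrow> qstate pmf) \<Rightarrow> (qstate \<Rightarrow> nat) \<Rightarrow> bool" where
  "queue_stable D q \<longleftrightarrow>
     (\<forall>\<epsilon>>0. \<exists>M::nat. \<forall>t. measure_pmf.prob (D t) {s. q s > M} < \<epsilon>)"

definition Q_p :: "qstate \<Rightarrow> nat" where "Q_p s = fst s"
definition Q_sp :: "qstate \<Rightarrow> nat" where "Q_sp s = fst (snd s)"
definition Q_s :: "qstate \<Rightarrow> nat" where "Q_s s = snd (snd s)"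

definition stab_region ::
  "real \<Rightarrow> real \<Rightarrow> real \<Rightarrow> real \<Rightarrow> real \<Rightarrow> (real \<times> real) set" where
  "stab_region fpd fsd fps pq pa =
     {(lp, ls). ls < pq * fsd * (1 - lp / (fpd + pa * fps * (1 - fpd))) \<and>
                lp < fsd * (1 - pq) * (fpd + pa * fps * (1 - fpd)) /
                     (fsd * (1 - pq) + pa * fps * (1 - fpd))}"

end

theory Submission
  imports Defs
begin

text \<open>Sufficiency is a Foster--Lyapunov argument. Under the two inequalities there are weights
  \<open>w, z > 1\<close> for which \<open>w ^ Q_p * z ^ Q_s\<close> and \<open>w ^ Q_p * z ^ Q_sp\<close> shrink in mean by a factor
  below one, up to a bounded term; their expectations then stay bounded over time, which makes the
  queue lengths tight.

  Necessity compares long-run rates. Summing the one-slot drift of the truncated lengths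
  \<open>min Q K\<close> over time and using tightness gives flow-balance inequalities in terms of the fractions
  of slots in which the PU is idle. They become strict because the empty state is visited a
  positive fraction of the time: tightness keeps the chain in a bounded box with probability at
  least \<open>1/4\<close>, and from the box the empty state is reached with probability bounded away from zero.\<close>

lemma integrable_bounded_pmf:
  fixes f :: "'a \<Rightarrow> real"
  assumes "\<And>y. \<bar>f y\<bar> \<le> B"
  shows "integrable (measure_pmf M) f"
  by (rule measure_pmf.integrable_const_bound[where B=B]) (auto simp: assms)

lemma integrable_indicator_pmf [simp]: "integrable (measure_pmf M) (indicator A :: 'a \<Rightarrow> real)"
  by (rule integrable_bounded_pmf[where B=1]) (simp split: split_indicator)

lemma expectation_abs_le:
  fixes f :: "'a \<Rightarrow> real"
  assumes "\<And>y. \<bar>f y\<bar> \<le> B"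
  shows "\<bar>measure_pmf.expectation M f\<bar> \<le> B"
proof -
  have "0 \<le> B" using assms[of undefined] by linarith
  have "\<bar>measure_pmf.expectation M f\<bar> \<le> measure_pmf.expectation M (\<lambda>y. \<bar>f y\<bar>)"
    by (rule integral_abs_bound)
  also have "\<dots> \<le> measure_pmf.expectation M (\<lambda>y. B)"
    using assms \<open>0 \<le> B\<close> by (intro integral_mono integrable_bounded_pmf[where B=B]) auto
  also have "\<dots> = B" using \<open>0 \<le> B\<close> by simp
  finally show ?thesis .
qed

lemma expectation_bind_pmf_bounded:
  fixes f :: "'b \<Rightarrow> real"
  assumes "\<And>y. \<bar>f y\<bar> \<le> B"
  shows "measure_pmf.expectation (bind_pmf M N) f
       = measure_pmf.expectation M (\<lambda>x. measure_pmf.expectation (N x) f)"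
  unfolding measure_pmf_bind
  by (rule integral_bind[where K="count_space UNIV" and B=B and B'=1])
     (auto simp: assms measurable_measure_pmf measure_pmf_in_subprob_algebra
        measure_pmf.emeasure_space_1 measure_pmf.prob_space_axioms)

lemma expectation_bind_bernoulli:
  fixes f :: "'b \<Rightarrow> real"
  assumes "0 \<le> p" "p \<le> 1" "\<And>b. finite (set_pmf (N b))"
  shows "measure_pmf.expectation (bind_pmf (bernoulli_pmf p) N) f
       = p * measure_pmf.expectation (N True) f + (1 - p) * measure_pmf.expectation (N False) f"
  using assms by (subst pmf_expectation_bind[where A=UNIV]) (auto simp: UNIV_bool)

lemma dynkin_lower_bound:
  fixes f r :: "'a \<Rightarrow> real"
  assumes D_Suc: "\<And>t. D (Suc t) = bind_pmf (D t) K"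
    and f_bdd: "\<And>y. \<bar>f y\<bar> \<le> B" and r_bdd: "\<And>y. \<bar>r y\<bar> \<le> B'"
    and drift: "\<And>x. r x \<le> measure_pmf.expectation (K x) f - f x"
  shows "measure_pmf.expectation (D 0) f + (\<Sum>t<n. measure_pmf.expectation (D t) r)
           \<le> measure_pmf.expectation (D n) f"
proof (induction n)
  case (Suc n)
  have int_f: "integrable (measure_pmf (D n)) f" and int_r: "integrable (measure_pmf (D n)) r"
    using f_bdd r_bdd by (blast intro: integrable_bounded_pmf)+
  have "measure_pmf.expectation (D 0) f + (\<Sum>t<Suc n. measure_pmf.expectation (D t) r)
      \<le> measure_pmf.expectation (D n) (\<lambda>x. f x + r x)"
    using Suc int_f int_r by simp
  also have "\<dots> \<le> measure_pmf.expectation (D n) (\<lambda>x. measure_pmf.expectation (K x) f)"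
  proof (rule integral_mono)
    show "integrable (measure_pmf (D n)) (\<lambda>x. f x + r x)" using int_f int_r by simp
    show "integrable (measure_pmf (D n)) (\<lambda>x. measure_pmf.expectation (K x) f)"
      by (rule integrable_bounded_pmf[OF expectation_abs_le[OF f_bdd]])
  qed (use drift in \<open>simp add: le_diff_eq add.commute\<close>)
  also have "\<dots> = measure_pmf.expectation (D (Suc n)) f"
    by (simp add: D_Suc expectation_bind_pmf_bounded[OF f_bdd])
  finally show ?case .
qed simp

lemma prob_iterate_lower_bound:
  assumes D_Suc: "\<And>t. D (Suc t) = bind_pmf (D t) K"
    and c: "0 \<le> c" "\<And>x. c \<le> pmf (K x) (h x)"
  shows "c ^ m * measure_pmf.prob (D t) {x. (h ^^ m) x \<in> A} \<le> measure_pmf.prob (D (t + m)) A"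
proof (induction m arbitrary: A)
  case (Suc m)
  have step: "c * measure_pmf.prob (D s) {x. h x \<in> B} \<le> measure_pmf.prob (D (Suc s)) B" for s B
  proof -
    have "c * indicator {x. h x \<in> B} x \<le> measure_pmf.prob (K x) B" for x
    proof (cases "h x \<in> B")
      case True
      have "c \<le> measure_pmf.prob (K x) {h x}" using c by (simp add: measure_pmf_single)
      also have "\<dots> \<le> measure_pmf.prob (K x) B" using True by (intro measure_pmf.finite_measure_mono) auto
      finally show ?thesis using True by simp
    qed simp
    hence "measure_pmf.expectation (D s) (\<lambda>x. c * indicator {x. h x \<in> B} x)
        \<le> measure_pmf.expectation (D s) (\<lambda>x. measure_pmf.prob (K x) B)"
      by (intro integral_mono integrable_bounded_pmf[where B="\<bar>c\<bar>"] integrable_bounded_pmf[where B=1])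
         (auto split: split_indicator)
    also have "\<dots> = measure_pmf.prob (D (Suc s)) B"
      using expectation_bind_pmf_bounded[of "indicator B" 1 "D s" K]
      by (simp add: D_Suc split: split_indicator)
    finally show ?thesis by simp
  qed
  have "c ^ Suc m * measure_pmf.prob (D t) {x. (h ^^ Suc m) x \<in> A}
      = c * (c ^ m * measure_pmf.prob (D t) {x. (h ^^ m) x \<in> {x. h x \<in> A}})" by simp
  also have "\<dots> \<le> c * measure_pmf.prob (D (t + m)) {x. h x \<in> A}"
    using Suc.IH[of "{x. h x \<in> A}"] c(1) by (intro mult_left_mono) auto
  also have "\<dots> \<le> measure_pmf.prob (D (t + Suc m)) A" using step by simp
  finally show ?case .
qed simp

lemma nn_integral_bounded_of_geometric_drift:
  fixes V :: "'a \<Rightarrow> real"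
  assumes D_Suc: "\<And>t. D (Suc t) = bind_pmf (D t) K" and D_0: "D 0 = return_pmf x\<^sub>0"
    and V_nonneg: "\<And>y. 0 \<le> V y" and V_int: "\<And>x. integrable (measure_pmf (K x)) V"
    and drift: "\<And>x. measure_pmf.expectation (K x) V \<le> \<rho> * V x + b"
    and "0 \<le> \<rho>" "\<rho> < 1" "0 \<le> b"
  shows "(\<integral>\<^sup>+y. ennreal (V y) \<partial>D t) \<le> ennreal (max (V x\<^sub>0) (b / (1 - \<rho>)))"
proof (induction t)
  case 0
  show ?case by (simp add: D_0 ennreal_leI)
next
  case (Suc t)
  define C where "C = max (V x\<^sub>0) (b / (1 - \<rho>))"
  have C_nonneg: "0 \<le> C" using V_nonneg[of x\<^sub>0] by (simp add: C_def le_max_iff_disj)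
  have C_invariant: "\<rho> * C + b \<le> C"
  proof -
    have "b \<le> C * (1 - \<rho>)" using \<open>\<rho> < 1\<close> by (simp add: C_def pos_divide_le_eq[symmetric])
    thus ?thesis by (simp add: algebra_simps)
  qed
  have pointwise: "ennreal (measure_pmf.expectation (K x) V) \<le> ennreal \<rho> * ennreal (V x) + ennreal b" for x
    using drift[of x] V_nonneg[of x] \<open>0 \<le> \<rho>\<close> \<open>0 \<le> b\<close>
    by (simp add: ennreal_plus[symmetric] ennreal_mult[symmetric] ennreal_leI del: ennreal_plus)
  have "(\<integral>\<^sup>+y. ennreal (V y) \<partial>D (Suc t))
      = (\<integral>\<^sup>+x. ennreal (measure_pmf.expectation (K x) V) \<partial>D t)"
    using V_int V_nonneg by (simp add: D_Suc nn_integral_eq_integral)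
  also have "\<dots> \<le> (\<integral>\<^sup>+x. ennreal \<rho> * ennreal (V x) + ennreal b \<partial>D t)"
    by (intro nn_integral_mono pointwise)
  also have "\<dots> = ennreal \<rho> * (\<integral>\<^sup>+x. ennreal (V x) \<partial>D t) + ennreal b"
    by (simp add: nn_integral_add nn_integral_cmult measure_pmf.emeasure_space_1)
  also have "\<dots> \<le> ennreal \<rho> * ennreal C + ennreal b"
    using Suc.IH by (intro add_mono mult_left_mono) (auto simp: C_def)
  also have "\<dots> \<le> ennreal C"
    using C_invariant C_nonneg \<open>0 \<le> \<rho>\<close> \<open>0 \<le> b\<close>
    by (simp add: ennreal_mult[symmetric] ennreal_plus[symmetric] ennreal_leI del: ennreal_plus)
  finally show ?case by (simp add: C_def)
qed

lemma tail_small_of_exponential_moment: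
  fixes D :: "nat \<Rightarrow> 'a pmf" and V :: "'a \<Rightarrow> real" and q :: "'a \<Rightarrow> nat"
  assumes moment: "\<And>t. (\<integral>\<^sup>+y. ennreal (V y) \<partial>D t) \<le> ennreal C"
    and "0 \<le> C" and V_ge: "\<And>y. base ^ q y \<le> V y" and "1 < base" and "0 < \<epsilon>"
  shows "\<exists>M. \<forall>t. measure_pmf.prob (D t) {s. M < q s} < \<epsilon>"
proof -
  obtain M where M: "C / \<epsilon> < base ^ M" using real_arch_pow[OF \<open>1 < base\<close>] by blast
  have "measure_pmf.prob (D t) {s. M < q s} < \<epsilon>" for t
  proof -
    let ?A = "{s. M < q s}"
    have "ennreal (base ^ Suc M) * emeasure (D t) ?A = (\<integral>\<^sup>+y. ennreal (base ^ Suc M) * indicator ?A y \<partial>D t)"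
      by (simp add: nn_integral_cmult_indicator)
    also have "\<dots> \<le> (\<integral>\<^sup>+y. ennreal (V y) \<partial>D t)"
    proof (rule nn_integral_mono)
      fix y
      have "y \<in> ?A \<Longrightarrow> base ^ Suc M \<le> V y"
        using V_ge[of y] \<open>1 < base\<close> power_increasing[of "Suc M" "q y" base] by simp
      thus "ennreal (base ^ Suc M) * indicator ?A y \<le> ennreal (V y)"
        by (simp add: ennreal_leI split: split_indicator)
    qed
    also have "\<dots> \<le> ennreal C" by (rule moment)
    finally have bound: "base ^ Suc M * measure_pmf.prob (D t) ?A \<le> C"
      using \<open>1 < base\<close> \<open>0 \<le> C\<close>
      by (simp add: measure_pmf.emeasure_eq_measure ennreal_mult[symmetric])
    have "C < base ^ M * \<epsilon>" using M \<open>0 < \<epsilon>\<close> by (simp add: divide_less_eq)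
    also have "\<dots> \<le> base ^ Suc M * \<epsilon>"
      using \<open>0 < \<epsilon>\<close> \<open>1 < base\<close> by (intro mult_right_mono power_increasing) auto
    finally have "C < base ^ Suc M * \<epsilon>" .
    thus ?thesis using bound \<open>1 < base\<close> by (smt (verit) mult_less_cancel_left_pos zero_less_power)
  qed
  thus ?thesis by blast
qed

lemma nonpos_of_linear_bound:
  fixes a B :: real
  assumes "\<And>n::nat. real n * a \<le> B"
  shows "a \<le> 0"
proof (rule ccontr)
  assume "\<not> a \<le> 0"
  moreover obtain n :: nat where "B / a < real n" using reals_Archimedean2 by blast
  ultimately have "B < real n * a" by (simp add: field_simps)
  thus False using assms[of n] by simp
qed

lemma le_of_le_plus_small_multiple:
  fixes x y u :: real
  assumes "\<And>\<epsilon>. 0 < \<epsilon> \<Longrightarrow> \<epsilon> < 1 \<Longrightarrow> x \<le> y + \<epsilon> * u"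
  shows "x \<le> y"
proof (rule field_le_epsilon)
  fix d :: real assume "0 < d"
  define \<epsilon> where "\<epsilon> = min (1/2) (d / (\<bar>u\<bar> + 1))"
  have \<epsilon>: "0 < \<epsilon>" "\<epsilon> < 1" using \<open>0 < d\<close> by (auto simp: \<epsilon>_def)
  have "\<epsilon> * u \<le> \<epsilon> * \<bar>u\<bar>" using \<epsilon> by (simp add: mult_left_mono)
  also have "\<dots> \<le> d / (\<bar>u\<bar> + 1) * \<bar>u\<bar>" by (rule mult_right_mono) (auto simp: \<epsilon>_def)
  also have "\<dots> \<le> d" using \<open>0 < d\<close> by (simp add: field_simps)
  finally show "x \<le> y + d" using assms[OF \<epsilon>] by linarith
qed

lemma exists_pos_both_below_one:
  fixes f\<^sub>1 f\<^sub>2 :: "real \<Rightarrow> real"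
  assumes "f\<^sub>1 0 = 1" "f\<^sub>2 0 = 1"
    and "(f\<^sub>1 has_real_derivative d\<^sub>1) (at 0)" "(f\<^sub>2 has_real_derivative d\<^sub>2) (at 0)" "d\<^sub>1 < 0" "d\<^sub>2 < 0"
  shows "\<exists>h>0. f\<^sub>1 h < 1 \<and> f\<^sub>2 h < 1"
proof -
  obtain r\<^sub>1 where "r\<^sub>1 > 0" "\<forall>h>0. h < r\<^sub>1 \<longrightarrow> f\<^sub>1 (0 + h) < f\<^sub>1 0"
    using DERIV_neg_dec_right[OF assms(3,5)] by blast
  moreover obtain r\<^sub>2 where "r\<^sub>2 > 0" "\<forall>h>0. h < r\<^sub>2 \<longrightarrow> f\<^sub>2 (0 + h) < f\<^sub>2 0"
    using DERIV_neg_dec_right[OF assms(4,6)] by blast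
  ultimately show ?thesis
    using assms(1,2) by (intro exI[of _ "min r\<^sub>1 r\<^sub>2 / 2"]) auto
qed

text \<open>One step of a birth--death chain on \<open>\<nat>\<close>: up with probability \<open>\<alpha>\<close>, down with
  probability \<open>\<beta>\<close>. At \<open>0\<close> the down-step is a no-op, thanks to truncated subtraction.\<close>
definition birth_death_mean :: "real \<Rightarrow> real \<Rightarrow> (nat \<Rightarrow> real) \<Rightarrow> nat \<Rightarrow> real" where
  "birth_death_mean \<alpha> \<beta> \<phi> n = \<phi> n + \<alpha> * (\<phi> (Suc n) - \<phi> n) + \<beta> * (\<phi> (n - 1) - \<phi> n)"

lemma birth_death_mean_const [simp]: "birth_death_mean \<alpha> \<beta> (\<lambda>_. a) n = a"
  by (simp add: birth_death_mean_def)

lemma birth_death_mean_truncated_ge: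
  assumes "0 \<le> \<alpha>" "0 \<le> \<beta>" "1 \<le> K"
  shows "\<alpha> - \<beta> * of_bool (0 < n) - \<alpha> * of_bool (K \<le> n)
           \<le> birth_death_mean \<alpha> \<beta> (\<lambda>n. real (min n K)) n - real (min n K)"
proof -
  consider "n = 0" | "0 < n" "n < K" | "n = K" | "K < n" by linarith
  thus ?thesis
  proof cases
    case 2
    hence "min (n - 1) K = n - 1" "min (Suc n) K = Suc n" "min n K = n" by auto
    thus ?thesis using 2 by (simp add: birth_death_mean_def of_nat_diff)
  next
    case 3
    hence "min (n - 1) K = n - 1" "min (Suc n) K = n" "min n K = n" by auto
    thus ?thesis using 3 assms by (simp add: birth_death_mean_def of_nat_diff)
  next
    case 4
    hence "min (n - 1) K = K" "min (Suc n) K = K" "min n K = K" by auto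
    thus ?thesis using 4 assms by (simp add: birth_death_mean_def)
  qed (use assms in \<open>simp add: birth_death_mean_def\<close>)
qed

lemma birth_death_mean_power:
  fixes w :: real
  assumes "w \<noteq> 0"
  shows "birth_death_mean \<alpha> \<beta> (\<lambda>n. w ^ n) n
           = (1 + \<alpha> * (w - 1) + \<beta> * of_bool (0 < n) * (1 / w - 1)) * w ^ n"
  using assms by (cases n) (simp_all add: birth_death_mean_def algebra_simps)

lemma tail_le_of_queue_stable:
  assumes "queue_stable D q" "0 < \<epsilon>"
  shows "\<exists>K\<ge>1. \<forall>K'\<ge>K. \<forall>t. measure_pmf.prob (D t) {y. K' \<le> q y} \<le> \<epsilon>"
proof -
  obtain M :: nat where M: "\<forall>t. measure_pmf.prob (D t) {s. M < q s} < \<epsilon>"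
    using assms unfolding queue_stable_def by blast
  have "measure_pmf.prob (D t) {y. K' \<le> q y} \<le> \<epsilon>" if "Suc M \<le> K'" for K' t
  proof -
    have "measure_pmf.prob (D t) {y. K' \<le> q y} \<le> measure_pmf.prob (D t) {s. M < q s}"
      using that by (intro measure_pmf.finite_measure_mono) auto
    thus ?thesis using M by (meson less_imp_le order_trans)
  qed
  thus ?thesis by (intro exI[of _ "Suc M"]) auto
qed

locale cognitive_radio =
  fixes lp ls fpd fsd fps pq pa :: real
  assumes fpd: "0 < fpd" "fpd < 1" and fsd: "0 < fsd" "fsd < 1" and fps: "0 < fps" "fps < 1"
    and pq: "0 < pq" "pq < 1" and pa: "0 \<le> pa" "pa \<le> 1"
    and lp: "0 \<le> lp" "lp \<le> 1" and ls: "0 \<le> ls" "ls \<le> 1"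
begin

abbreviation "S \<equiv> slot lp ls fpd fsd fps pq pa"
abbreviation "D \<equiv> state_dist lp ls fpd fsd fps pq pa"
abbreviation "ES x f \<equiv> measure_pmf.expectation (S x) f"

text \<open>In a busy slot \<open>Q_p\<close> loses its head packet with probability \<open>mu_p\<close>, and the packet moves to
  \<open>Q_sp\<close> with probability \<open>relay_in\<close>; in an idle slot the SU serves \<open>Q_s\<close> with probability \<open>mu_s\<close> and
  \<open>Q_sp\<close> with probability \<open>relay_out\<close>.\<close>
abbreviation "relay_in \<equiv> pa * fps * (1 - fpd)"
abbreviation "mu_p \<equiv> fpd + relay_in"
abbreviation "mu_s \<equiv> pq * fsd"
abbreviation "relay_out \<equiv> (1 - pq) * fsd"

lemma rates:
  "0 < mu_p" "mu_p < 1" "0 \<le> relay_in" "relay_in \<le> mu_p"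
  "0 < mu_s" "mu_s < 1" "0 < relay_out" "relay_out < 1"
proof -
  have "pa * fps < 1" using pa fps mult_right_mono[of pa 1 fps] by linarith
  hence "relay_in < 1 - fpd" using fpd by simp
  thus "mu_p < 1" by simp
  show "0 \<le> relay_in" using fpd fps pa by simp
  thus "0 < mu_p" "relay_in \<le> mu_p" using fpd by simp_all
  show "0 < mu_s" "0 < relay_out" using fsd pq by auto
  show "mu_s < 1" "relay_out < 1"
    using fsd pq mult_strict_mono[of pq 1 fsd 1] mult_strict_mono[of "1 - pq" 1 fsd 1] by auto
qed

lemma D_0: "D 0 = return_pmf (0, 0, 0)"
  by (simp add: state_dist_def)

lemma D_Suc: "D (Suc t) = bind_pmf (D t) S"
  by (simp add: state_dist_def)

lemma finite_set_pmf_slot: "finite (set_pmf (S x))"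
proof -
  obtain a b c where x: "x = (a, b, c)" by (cases x)
  have "set_pmf (S x) \<subseteq> {..a+1} \<times> {..b+1} \<times> {..c+1}"
    unfolding x slot_def by (auto simp: Let_def split: if_splits)
  thus ?thesis by (rule finite_subset) auto
qed

lemma integrable_slot [simp]: "integrable (measure_pmf (S x)) (f :: qstate \<Rightarrow> real)"
  by (rule integrable_measure_pmf_finite[OF finite_set_pmf_slot])

text \<open>Mean of \<open>f\<close> over the outcome of a PU transmission, for the lengths after the arrivals.\<close>
definition busy_outcome_mean :: "(qstate \<Rightarrow> real) \<Rightarrow> nat \<Rightarrow> nat \<Rightarrow> nat \<Rightarrow> real" where
  "busy_outcome_mean f qp qsp qs =
     fpd * f (qp - 1, qsp, qs)
     + (1 - fpd) * (fps * (pa * f (qp - 1, qsp + 1, qs) + (1 - pa) * f (qp, qsp, qs))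
                    + (1 - fps) * f (qp, qsp, qs))"

text \<open>Mean of \<open>f\<close> over the SU arrival and the SU transmission, with \<open>a\<close> the new length of \<open>Q_p\<close>.\<close>
definition idle_outcome_mean :: "(qstate \<Rightarrow> real) \<Rightarrow> nat \<Rightarrow> nat \<Rightarrow> nat \<Rightarrow> real" where
  "idle_outcome_mean f a qsp qs =
     ls * (pq * (fsd * f (a, qsp, qs - of_bool (0 < qs) + 1) + (1 - fsd) * f (a, qsp, qs + 1))
           + (1 - pq) * (fsd * f (a, qsp - of_bool (0 < qsp), qs + 1) + (1 - fsd) * f (a, qsp, qs + 1)))
     + (1 - ls) * (pq * (fsd * f (a, qsp, qs - of_bool (0 < qs)) + (1 - fsd) * f (a, qsp, qs))
           + (1 - pq) * (fsd * f (a, qsp - of_bool (0 < qsp), qs) + (1 - fsd) * f (a, qsp, qs)))"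

lemma slot_mean_busy:
  assumes "0 < qp"
  shows "ES (qp, qsp, qs) f
     = lp * (ls * busy_outcome_mean f (qp + 1) qsp (qs + 1) + (1 - ls) * busy_outcome_mean f (qp + 1) qsp qs)
       + (1 - lp) * (ls * busy_outcome_mean f qp qsp (qs + 1) + (1 - ls) * busy_outcome_mean f qp qsp qs)"
  using assms fpd fps pa lp ls unfolding slot_def busy_outcome_mean_def
  by (simp add: expectation_bind_bernoulli Let_def)

lemma slot_mean_idle:
  "ES (0, qsp, qs) f = lp * idle_outcome_mean f 1 qsp qs + (1 - lp) * idle_outcome_mean f 0 qsp qs"
  using fsd pq lp ls unfolding slot_def idle_outcome_mean_def
  by (simp add: expectation_bind_bernoulli Let_def of_bool_def)

lemma slot_mean_Q_p_Q_s_busy: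
  assumes "0 < qp"
  shows "ES (qp, qsp, qs) (\<lambda>y. \<psi> (Q_p y) * \<eta> (Q_s y))
     = birth_death_mean (lp * (1 - mu_p)) ((1 - lp) * mu_p) \<psi> qp * birth_death_mean ls 0 \<eta> qs"
  using assms
  by (simp add: slot_mean_busy busy_outcome_mean_def birth_death_mean_def Q_p_def Q_s_def algebra_simps)

lemma slot_mean_Q_p_Q_s_idle:
  assumes "0 < qs"
  shows "ES (0, qsp, qs) (\<lambda>y. \<psi> (Q_p y) * \<eta> (Q_s y))
     = birth_death_mean lp 0 \<psi> 0 * birth_death_mean (ls * (1 - mu_s)) ((1 - ls) * mu_s) \<eta> qs"
  using assms
  by (simp add: slot_mean_idle idle_outcome_mean_def birth_death_mean_def Q_p_def Q_s_def algebra_simps)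

lemma slot_mean_Q_p_Q_s_idle_empty:
  "ES (0, qsp, 0) (\<lambda>y. \<psi> (Q_p y) * \<eta> (Q_s y))
     = birth_death_mean lp 0 \<psi> 0 * birth_death_mean ls 0 \<eta> 0"
  by (simp add: slot_mean_idle idle_outcome_mean_def birth_death_mean_def Q_p_def Q_s_def algebra_simps)

text \<open>While the PU is busy, \<open>Q_p\<close> and \<open>Q_sp\<close> are coupled: a relayed packet moves from one to the other.\<close>
lemma slot_mean_Q_p_Q_sp_busy:
  assumes "0 < qp"
  shows "ES (qp, qsp, qs) (\<lambda>y. \<psi> (Q_p y) * \<eta> (Q_sp y))
     = lp * (fpd * \<psi> qp * \<eta> qsp + relay_in * \<psi> qp * \<eta> (qsp + 1) + (1 - mu_p) * \<psi> (qp + 1) * \<eta> qsp)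
       + (1 - lp) * (fpd * \<psi> (qp - 1) * \<eta> qsp + relay_in * \<psi> (qp - 1) * \<eta> (qsp + 1)
                     + (1 - mu_p) * \<psi> qp * \<eta> qsp)"
  using assms by (simp add: slot_mean_busy busy_outcome_mean_def Q_p_def Q_sp_def algebra_simps)

lemma slot_mean_Q_p_Q_sp_idle:
  "ES (0, qsp, qs) (\<lambda>y. \<psi> (Q_p y) * \<eta> (Q_sp y))
     = birth_death_mean lp 0 \<psi> 0 * birth_death_mean 0 relay_out \<eta> qsp"
  by (cases qsp)
     (simp_all add: slot_mean_idle idle_outcome_mean_def birth_death_mean_def Q_p_def Q_sp_def algebra_simps)

lemma truncated_Q_p_drift:
  assumes "1 \<le> K"
  shows "lp - mu_p * indicator {y. 0 < Q_p y} x - lp * indicator {y. K \<le> Q_p y} x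
           \<le> ES x (\<lambda>y. real (min (Q_p y) K)) - real (min (Q_p x) K)"
proof -
  obtain qp qsp qs where x: "x = (qp, qsp, qs)" by (cases x)
  let ?\<phi> = "\<lambda>n. real (min n K)"
  show ?thesis
  proof (cases "qp = 0")
    case True
    have "ES x (\<lambda>y. ?\<phi> (Q_p y)) - ?\<phi> (Q_p x) = birth_death_mean lp 0 ?\<phi> 0 - ?\<phi> 0"
      using slot_mean_Q_p_Q_sp_idle[where \<psi>="?\<phi>" and \<eta>="\<lambda>_. 1"] by (simp add: x True Q_p_def)
    moreover have "lp - mu_p * indicator {y. 0 < Q_p y} x - lp * indicator {y. K \<le> Q_p y} x = lp"
      using True assms by (simp add: x Q_p_def)
    ultimately show ?thesis using birth_death_mean_truncated_ge[of lp 0 K 0] lp assms by simp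
  next
    case False
    have "ES x (\<lambda>y. ?\<phi> (Q_p y)) - ?\<phi> (Q_p x)
        = birth_death_mean (lp * (1 - mu_p)) ((1 - lp) * mu_p) ?\<phi> qp - ?\<phi> qp"
      using slot_mean_Q_p_Q_s_busy[where \<psi>="?\<phi>" and \<eta>="\<lambda>_. 1"] False by (simp add: x Q_p_def)
    moreover have "lp - mu_p * indicator {y. 0 < Q_p y} x - lp * indicator {y. K \<le> Q_p y} x
        \<le> lp * (1 - mu_p) - (1 - lp) * mu_p * of_bool (0 < qp) - lp * (1 - mu_p) * of_bool (K \<le> qp)"
      using False lp rates mult_nonneg_nonneg[of lp mu_p] by (simp add: x Q_p_def algebra_simps)
    ultimately show ?thesis
      using birth_death_mean_truncated_ge[of "lp * (1 - mu_p)" "(1 - lp) * mu_p" K qp] lp rates assms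
      by simp
  qed
qed

lemma truncated_Q_s_drift:
  assumes "1 \<le> K"
  shows "ls - mu_s * indicator {y. Q_p y = 0 \<and> 0 < Q_s y} x - ls * indicator {y. K \<le> Q_s y} x
           \<le> ES x (\<lambda>y. real (min (Q_s y) K)) - real (min (Q_s x) K)"
proof -
  obtain qp qsp qs where x: "x = (qp, qsp, qs)" by (cases x)
  let ?\<phi> = "\<lambda>n. real (min n K)"
  consider "0 < qp" | "qp = 0" "0 < qs" | "qp = 0" "qs = 0" by auto
  then show ?thesis
  proof cases
    case 1
    have "ES x (\<lambda>y. ?\<phi> (Q_s y)) - ?\<phi> (Q_s x) = birth_death_mean ls 0 ?\<phi> qs - ?\<phi> qs"
      using slot_mean_Q_p_Q_s_busy[where \<psi>="\<lambda>_. 1" and \<eta>="?\<phi>"] 1 by (simp add: x Q_s_def)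
    moreover have "ls - mu_s * indicator {y. Q_p y = 0 \<and> 0 < Q_s y} x - ls * indicator {y. K \<le> Q_s y} x
        = ls - ls * of_bool (K \<le> qs)"
      using 1 by (simp add: x Q_p_def Q_s_def)
    ultimately show ?thesis using birth_death_mean_truncated_ge[of ls 0 K qs] ls assms by simp
  next
    case 2
    have "ES x (\<lambda>y. ?\<phi> (Q_s y)) - ?\<phi> (Q_s x)
        = birth_death_mean (ls * (1 - mu_s)) ((1 - ls) * mu_s) ?\<phi> qs - ?\<phi> qs"
      using slot_mean_Q_p_Q_s_idle[where \<psi>="\<lambda>_. 1" and \<eta>="?\<phi>"] 2 by (simp add: x Q_s_def)
    moreover have "ls - mu_s * indicator {y. Q_p y = 0 \<and> 0 < Q_s y} x - ls * indicator {y. K \<le> Q_s y} x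
        \<le> ls * (1 - mu_s) - (1 - ls) * mu_s * of_bool (0 < qs) - ls * (1 - mu_s) * of_bool (K \<le> qs)"
      using 2 ls rates mult_nonneg_nonneg[of ls mu_s] by (simp add: x Q_p_def Q_s_def algebra_simps)
    ultimately show ?thesis
      using birth_death_mean_truncated_ge[of "ls * (1 - mu_s)" "(1 - ls) * mu_s" K qs] ls rates assms
      by simp
  next
    case 3
    have "ES x (\<lambda>y. ?\<phi> (Q_s y)) - ?\<phi> (Q_s x) = birth_death_mean ls 0 ?\<phi> 0 - ?\<phi> 0"
      using slot_mean_Q_p_Q_s_idle_empty[where \<psi>="\<lambda>_. 1" and \<eta>="?\<phi>"] 3 by (simp add: x Q_s_def)
    moreover have "ls - mu_s * indicator {y. Q_p y = 0 \<and> 0 < Q_s y} x - ls * indicator {y. K \<le> Q_s y} x = ls"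
      using 3 assms by (simp add: x Q_p_def Q_s_def)
    ultimately show ?thesis using birth_death_mean_truncated_ge[of ls 0 K 0] ls assms by simp
  qed
qed

lemma truncated_Q_sp_drift:
  assumes "1 \<le> K"
  shows "relay_in - relay_in * indicator {y. Q_p y = 0} x
           - relay_out * indicator {y. Q_p y = 0 \<and> 0 < Q_sp y} x - relay_in * indicator {y. K \<le> Q_sp y} x
           \<le> ES x (\<lambda>y. real (min (Q_sp y) K)) - real (min (Q_sp x) K)"
proof -
  obtain qp qsp qs where x: "x = (qp, qsp, qs)" by (cases x)
  let ?\<phi> = "\<lambda>n. real (min n K)"
  show ?thesis
  proof (cases "qp = 0")
    case True
    have "ES x (\<lambda>y. ?\<phi> (Q_sp y)) - ?\<phi> (Q_sp x) = birth_death_mean 0 relay_out ?\<phi> qsp - ?\<phi> qsp"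
      using slot_mean_Q_p_Q_sp_idle[where \<psi>="\<lambda>_. 1" and \<eta>="?\<phi>"] by (simp add: x True Q_sp_def)
    moreover have "relay_in - relay_in * indicator {y. Q_p y = 0} x
        - relay_out * indicator {y. Q_p y = 0 \<and> 0 < Q_sp y} x - relay_in * indicator {y. K \<le> Q_sp y} x
        \<le> 0 - relay_out * of_bool (0 < qsp) - 0 * of_bool (K \<le> qsp)"
      using True rates by (simp add: x Q_p_def Q_sp_def)
    ultimately show ?thesis using birth_death_mean_truncated_ge[of 0 relay_out K qsp] rates assms by simp
  next
    case False
    have "ES x (\<lambda>y. ?\<phi> (Q_sp y)) - ?\<phi> (Q_sp x) = birth_death_mean relay_in 0 ?\<phi> qsp - ?\<phi> qsp"
      using slot_mean_Q_p_Q_sp_busy[where \<psi>="\<lambda>_. 1" and \<eta>="?\<phi>"] False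
      by (simp add: x Q_sp_def birth_death_mean_def algebra_simps)
    moreover have "relay_in - relay_in * indicator {y. Q_p y = 0} x
        - relay_out * indicator {y. Q_p y = 0 \<and> 0 < Q_sp y} x - relay_in * indicator {y. K \<le> Q_sp y} x
        = relay_in - 0 * of_bool (0 < qsp) - relay_in * of_bool (K \<le> qsp)"
      using False by (simp add: x Q_p_def Q_sp_def)
    ultimately show ?thesis using birth_death_mean_truncated_ge[of relay_in 0 K qsp] rates assms by simp
  qed
qed

abbreviation "arrival_pgf_p w \<equiv> 1 + lp * (w - 1)"
abbreviation "arrival_pgf_s z \<equiv> 1 + ls * (z - 1)"

lemma exponential_drift_Q_p_Q_s:
  assumes "1 < w" "1 < z" "0 \<le> \<rho>"
    and busy: "arrival_pgf_p w * (1 - mu_p + mu_p / w) * arrival_pgf_s z \<le> \<rho>"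
    and idle: "arrival_pgf_p w * arrival_pgf_s z * (1 - mu_s + mu_s / z) \<le> \<rho>"
  shows "ES x (\<lambda>y. w ^ Q_p y * z ^ Q_s y)
           \<le> \<rho> * (w ^ Q_p x * z ^ Q_s x) + arrival_pgf_p w * arrival_pgf_s z"
proof -
  obtain qp qsp qs where x: "x = (qp, qsp, qs)" by (cases x)
  have pgf_nonneg: "0 \<le> arrival_pgf_p w * arrival_pgf_s z" using assms lp ls by simp
  have V_nonneg: "0 \<le> \<rho> * (w ^ qp * z ^ qs)" using assms by simp
  consider "0 < qp" | "qp = 0" "0 < qs" | "qp = 0" "qs = 0" by auto
  then show ?thesis
  proof cases
    case 1
    have "ES x (\<lambda>y. w ^ Q_p y * z ^ Q_s y)
        = arrival_pgf_p w * (1 - mu_p + mu_p / w) * arrival_pgf_s z * (w ^ qp * z ^ qs)"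
      using slot_mean_Q_p_Q_s_busy[where \<psi>="\<lambda>n. w ^ n" and \<eta>="\<lambda>n. z ^ n"] 1 assms
      by (simp add: x birth_death_mean_power field_simps)
    also have "\<dots> \<le> \<rho> * (w ^ qp * z ^ qs)" using busy assms by (intro mult_right_mono) auto
    finally show ?thesis using pgf_nonneg by (simp add: x Q_p_def Q_s_def)
  next
    case 2
    have "ES x (\<lambda>y. w ^ Q_p y * z ^ Q_s y)
        = arrival_pgf_p w * arrival_pgf_s z * (1 - mu_s + mu_s / z) * z ^ qs"
      using slot_mean_Q_p_Q_s_idle[where \<psi>="\<lambda>n. w ^ n" and \<eta>="\<lambda>n. z ^ n"] 2 assms
      by (simp add: x birth_death_mean_power field_simps)
    also have "\<dots> \<le> \<rho> * z ^ qs" using idle assms by (intro mult_right_mono) auto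
    finally show ?thesis using pgf_nonneg 2 by (simp add: x Q_p_def Q_s_def)
  next
    case 3
    have "ES x (\<lambda>y. w ^ Q_p y * z ^ Q_s y) = arrival_pgf_p w * arrival_pgf_s z"
      using slot_mean_Q_p_Q_s_idle_empty[where \<psi>="\<lambda>n. w ^ n" and \<eta>="\<lambda>n. z ^ n"] 3
      by (simp add: x birth_death_mean_def)
    then show ?thesis using V_nonneg 3 by (simp add: x Q_p_def Q_s_def)
  qed
qed

lemma exponential_drift_Q_p_Q_sp:
  assumes "1 < w" "1 < z" "0 \<le> \<rho>"
    and busy: "arrival_pgf_p w * (1 - mu_p + (fpd + relay_in * z) / w) \<le> \<rho>"
    and idle: "arrival_pgf_p w * (1 - relay_out + relay_out / z) \<le> \<rho>"
  shows "ES x (\<lambda>y. w ^ Q_p y * z ^ Q_sp y) \<le> \<rho> * (w ^ Q_p x * z ^ Q_sp x) + arrival_pgf_p w"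
proof -
  obtain qp qsp qs where x: "x = (qp, qsp, qs)" by (cases x)
  have pgf_nonneg: "0 \<le> arrival_pgf_p w" using assms lp by simp
  have V_nonneg: "0 \<le> \<rho> * (w ^ qp * z ^ qsp)" using assms by simp
  consider "0 < qp" | "qp = 0" "0 < qsp" | "qp = 0" "qsp = 0" by auto
  then show ?thesis
  proof cases
    case 1
    then obtain k where k: "qp = Suc k" using gr0_conv_Suc by auto
    have "ES x (\<lambda>y. w ^ Q_p y * z ^ Q_sp y)
        = lp * (fpd * w ^ qp * z ^ qsp + relay_in * w ^ qp * z ^ (qsp + 1) + (1 - mu_p) * w ^ (qp + 1) * z ^ qsp)
          + (1 - lp) * (fpd * w ^ (qp - 1) * z ^ qsp + relay_in * w ^ (qp - 1) * z ^ (qsp + 1)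
                        + (1 - mu_p) * w ^ qp * z ^ qsp)"
      unfolding x by (rule slot_mean_Q_p_Q_sp_busy[OF 1])
    also have "\<dots> = arrival_pgf_p w * (1 - mu_p + (fpd + relay_in * z) / w) * (w ^ qp * z ^ qsp)"
      using assms by (simp add: k field_simps)
    also have "\<dots> \<le> \<rho> * (w ^ qp * z ^ qsp)" using busy assms by (intro mult_right_mono) auto
    finally show ?thesis using pgf_nonneg by (simp add: x Q_p_def Q_sp_def)
  next
    case 2
    have "ES x (\<lambda>y. w ^ Q_p y * z ^ Q_sp y)
        = birth_death_mean lp 0 (\<lambda>n. w ^ n) 0 * birth_death_mean 0 relay_out (\<lambda>n. z ^ n) qsp"
      unfolding x 2 by (rule slot_mean_Q_p_Q_sp_idle)
    also have "\<dots> = arrival_pgf_p w * (1 - relay_out + relay_out / z) * z ^ qsp"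
      using 2 assms by (simp add: birth_death_mean_power field_simps)
    also have "\<dots> \<le> \<rho> * z ^ qsp" using idle assms by (intro mult_right_mono) auto
    finally show ?thesis using pgf_nonneg 2 by (simp add: x Q_p_def Q_sp_def)
  next
    case 3
    have "ES x (\<lambda>y. w ^ Q_p y * z ^ Q_sp y) = arrival_pgf_p w"
      using slot_mean_Q_p_Q_sp_idle[where \<psi>="\<lambda>n. w ^ n" and \<eta>="\<lambda>n. z ^ n"] 3
      by (simp add: x birth_death_mean_def)
    then show ?thesis using V_nonneg 3 by (simp add: x Q_p_def Q_sp_def)
  qed
qed

text \<open>Along \<open>(w, z) = (1 + a h, 1 + h)\<close>, with \<open>a\<close> chosen to equalise the two slopes, both growth
  factors have derivative at \<open>h = 0\<close> proportional to the slack of the stability condition.\<close>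
lemma exists_contracting_weights_Q_p_Q_s:
  assumes "ls * mu_p < mu_s * (mu_p - lp)"
  shows "\<exists>w z. 1 < w \<and> 1 < z
           \<and> arrival_pgf_p w * (1 - mu_p + mu_p / w) * arrival_pgf_s z < 1
           \<and> arrival_pgf_p w * arrival_pgf_s z * (1 - mu_s + mu_s / z) < 1"
proof -
  define m c where "m = mu_p" and "c = mu_s"
  define a where "a = c / m"
  have "0 < a" "a * m = c" using rates by (simp_all add: a_def m_def c_def)
  have slope: "a * lp + ls - c < 0"
    using assms rates \<open>a * m = c\<close> by (simp add: a_def m_def c_def field_simps)
  have d\<^sub>1: "((\<lambda>h. arrival_pgf_p (1 + a * h) * (1 - m + m / (1 + a * h)) * arrival_pgf_s (1 + h))
          has_real_derivative a * lp + ls - c) (at 0)"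
    using \<open>a * m = c\<close> by (auto intro!: derivative_eq_intros simp: algebra_simps)
  have d\<^sub>2: "((\<lambda>h. arrival_pgf_p (1 + a * h) * arrival_pgf_s (1 + h) * (1 - c + c / (1 + h)))
          has_real_derivative a * lp + ls - c) (at 0)"
    by (auto intro!: derivative_eq_intros simp: algebra_simps)
  obtain h where "0 < h"
    "arrival_pgf_p (1 + a * h) * (1 - m + m / (1 + a * h)) * arrival_pgf_s (1 + h) < 1"
    "arrival_pgf_p (1 + a * h) * arrival_pgf_s (1 + h) * (1 - c + c / (1 + h)) < 1"
    using exists_pos_both_below_one[OF _ _ d\<^sub>1 d\<^sub>2 slope slope] by auto
  thus ?thesis using \<open>0 < a\<close> unfolding m_def c_def by (intro exI[of _ "1 + a * h"] exI[of _ "1 + h"]) auto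
qed

lemma exists_contracting_weights_Q_p_Q_sp:
  assumes "lp * (relay_in + relay_out) < relay_out * mu_p"
  shows "\<exists>w z. 1 < w \<and> 1 < z
           \<and> arrival_pgf_p w * (1 - mu_p + (fpd + relay_in * z) / w) < 1
           \<and> arrival_pgf_p w * (1 - relay_out + relay_out / z) < 1"
proof -
  define m g e where "m = mu_p" and "g = relay_in" and "e = relay_out"
  define a where "a = (g + e) / m"
  have "0 < a" "a * m = g + e" "m = fpd + g" using rates by (simp_all add: a_def m_def g_def e_def add_nonneg_pos)
  have slope: "a * lp - e < 0"
    using assms rates by (simp add: a_def m_def g_def e_def field_simps)
  have d\<^sub>1: "((\<lambda>h. arrival_pgf_p (1 + a * h) * (1 - m + (fpd + g * (1 + h)) / (1 + a * h)))
          has_real_derivative a * lp - e) (at 0)"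
    using \<open>a * m = g + e\<close> \<open>m = fpd + g\<close> by (auto intro!: derivative_eq_intros simp: algebra_simps)
  have d\<^sub>2: "((\<lambda>h. arrival_pgf_p (1 + a * h) * (1 - e + e / (1 + h)))
          has_real_derivative a * lp - e) (at 0)"
    by (auto intro!: derivative_eq_intros simp: algebra_simps)
  obtain h where "0 < h"
    "arrival_pgf_p (1 + a * h) * (1 - m + (fpd + g * (1 + h)) / (1 + a * h)) < 1"
    "arrival_pgf_p (1 + a * h) * (1 - e + e / (1 + h)) < 1"
    using exists_pos_both_below_one[OF _ _ d\<^sub>1 d\<^sub>2 slope slope] \<open>m = fpd + g\<close> by simp blast
  thus ?thesis using \<open>0 < a\<close> unfolding m_def g_def e_def
    by (intro exI[of _ "1 + a * h"] exI[of _ "1 + h"]) auto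
qed

lemma queue_stable_of_geometric_drift:
  fixes V :: "qstate \<Rightarrow> real" and q :: "qstate \<Rightarrow> nat"
  assumes V_ge: "\<And>y. base ^ q y \<le> V y" and "1 < base"
    and drift: "\<And>x. ES x V \<le> \<rho> * V x + b" and "0 \<le> \<rho>" "\<rho> < 1" "0 \<le> b"
  shows "queue_stable D q"
  unfolding queue_stable_def
proof (intro allI impI)
  fix \<epsilon> :: real assume "0 < \<epsilon>"
  have V_nonneg: "0 \<le> V y" for y using V_ge[of y] \<open>1 < base\<close> by (smt (verit) zero_le_power)
  show "\<exists>M. \<forall>t. measure_pmf.prob (D t) {s. M < q s} < \<epsilon>"
  proof (rule tail_small_of_exponential_moment[OF _ _ V_ge \<open>1 < base\<close> \<open>0 < \<epsilon>\<close>])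
    show "(\<integral>\<^sup>+y. ennreal (V y) \<partial>D t) \<le> ennreal (max (V (0, 0, 0)) (b / (1 - \<rho>)))" for t
      using assms by (intro nn_integral_bounded_of_geometric_drift[OF D_Suc D_0 V_nonneg]) auto
    show "0 \<le> max (V (0, 0, 0)) (b / (1 - \<rho>))" using V_nonneg by (simp add: le_max_iff_disj)
  qed
qed

lemma stable_if_in_region:
  assumes "ls * mu_p < mu_s * (mu_p - lp)" "lp * (relay_in + relay_out) < relay_out * mu_p"
  shows "queue_stable D Q_p \<and> queue_stable D Q_sp \<and> queue_stable D Q_s"
proof -
  obtain w z where wz: "1 < w" "1 < z"
    "arrival_pgf_p w * (1 - mu_p + mu_p / w) * arrival_pgf_s z < 1"
    "arrival_pgf_p w * arrival_pgf_s z * (1 - mu_s + mu_s / z) < 1"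
    using exists_contracting_weights_Q_p_Q_s[OF assms(1)] by blast
  obtain w' z' where wz': "1 < w'" "1 < z'"
    "arrival_pgf_p w' * (1 - mu_p + (fpd + relay_in * z') / w') < 1"
    "arrival_pgf_p w' * (1 - relay_out + relay_out / z') < 1"
    using exists_contracting_weights_Q_p_Q_sp[OF assms(2)] by blast
  let ?\<rho> = "max 0 (max (arrival_pgf_p w * (1 - mu_p + mu_p / w) * arrival_pgf_s z)
                       (arrival_pgf_p w * arrival_pgf_s z * (1 - mu_s + mu_s / z)))"
  let ?\<rho>' = "max 0 (max (arrival_pgf_p w' * (1 - mu_p + (fpd + relay_in * z') / w'))
                        (arrival_pgf_p w' * (1 - relay_out + relay_out / z')))"
  have drift: "ES x (\<lambda>y. w ^ Q_p y * z ^ Q_s y)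
                 \<le> ?\<rho> * (w ^ Q_p x * z ^ Q_s x) + arrival_pgf_p w * arrival_pgf_s z" for x
    using wz by (intro exponential_drift_Q_p_Q_s) auto
  have drift': "ES x (\<lambda>y. w' ^ Q_p y * z' ^ Q_sp y) \<le> ?\<rho>' * (w' ^ Q_p x * z' ^ Q_sp x) + arrival_pgf_p w'" for x
    using wz' by (intro exponential_drift_Q_p_Q_sp) auto
  have b: "0 \<le> arrival_pgf_p w * arrival_pgf_s z" "0 \<le> arrival_pgf_p w'" using wz wz' lp ls by simp_all
  have "queue_stable D Q_p"
    by (rule queue_stable_of_geometric_drift[OF _ \<open>1 < w\<close> drift _ _ b(1)])
       (use wz in \<open>auto intro: mult_left_mono[of 1, simplified] one_le_power\<close>)
  moreover have "queue_stable D Q_s"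
    by (rule queue_stable_of_geometric_drift[OF _ \<open>1 < z\<close> drift _ _ b(1)])
       (use wz in \<open>auto intro: mult_right_mono[of 1, simplified] one_le_power\<close>)
  moreover have "queue_stable D Q_sp"
    by (rule queue_stable_of_geometric_drift[OF _ \<open>1 < z'\<close> drift' _ _ b(2)])
       (use wz' in \<open>auto intro: mult_right_mono[of 1, simplified] one_le_power\<close>)
  ultimately show ?thesis by blast
qed

text \<open>A transition of one slot without arrivals in which a queued packet, if any, leaves the system.\<close>
definition drain_step :: "qstate \<Rightarrow> qstate" where
  "drain_step x = (case x of (qp, qsp, qs) \<Rightarrow>
     if 0 < qp then (qp - 1, qsp, qs) else if 0 < qs then (0, qsp, qs - 1)
     else if 0 < qsp then (0, qsp - 1, 0) else (0, 0, 0))"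

lemma drain_step_funpow_empty:
  "qp + qsp + qs \<le> n \<Longrightarrow> (drain_step ^^ n) (qp, qsp, qs) = (0, 0, 0)"
proof (induction n arbitrary: qp qsp qs)
  case (Suc n)
  obtain a b c where abc: "drain_step (qp, qsp, qs) = (a, b, c)" by (cases "drain_step (qp, qsp, qs)")
  have "a + b + c \<le> n" using Suc.prems abc by (auto simp: drain_step_def split: if_splits)
  moreover have "(drain_step ^^ Suc n) (qp, qsp, qs) = (drain_step ^^ n) (a, b, c)"
    using abc by (simp only: funpow_Suc_right comp_def)
  ultimately show ?case using Suc.IH by simp
qed simp

definition drain_prob :: real where
  "drain_prob = (1 - lp) * (1 - ls) * min fpd (min mu_s relay_out)"

lemma drain_prob_nonneg: "0 \<le> drain_prob"
  using lp ls fpd rates unfolding drain_prob_def by simp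

lemma drain_prob_pos: "lp < 1 \<Longrightarrow> ls < 1 \<Longrightarrow> 0 < drain_prob"
  using fpd rates unfolding drain_prob_def by simp

lemma pmf_slot_drain_step_ge: "drain_prob \<le> pmf (S x) (drain_step x)"
proof -
  obtain qp qsp qs where x: "x = (qp, qsp, qs)" by (cases x)
  have no_arrival: "0 \<le> (1 - lp) * (1 - ls)" using lp ls by simp
  have pmf_eq: "pmf M y = measure_pmf.expectation M (indicator {y})" for M :: "qstate pmf" and y
    by (simp add: measure_pmf_single)
  consider "0 < qp" | "qp = 0" "0 < qs" | "qp = 0" "qs = 0" "0 < qsp" | "qp = 0" "qs = 0" "qsp = 0"
    by auto
  then show ?thesis
  proof cases
    case 1
    have "pmf (S x) (drain_step x) = (1 - lp) * (1 - ls) * fpd"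
      unfolding pmf_eq x slot_mean_busy[OF 1]
      using 1 by (cases qp) (simp_all add: busy_outcome_mean_def drain_step_def indicator_def)
    thus ?thesis using mult_left_mono[OF _ no_arrival] by (simp add: drain_prob_def)
  next
    case 2
    have "pmf (S x) (drain_step x) = (1 - lp) * (1 - ls) * mu_s"
      unfolding pmf_eq x 2(1) slot_mean_idle
      using 2 by (cases qs) (simp_all add: idle_outcome_mean_def drain_step_def indicator_def)
    thus ?thesis using mult_left_mono[OF _ no_arrival] by (simp add: drain_prob_def)
  next
    case 3
    have "pmf (S x) (drain_step x) = (1 - lp) * (1 - ls) * relay_out"
      unfolding pmf_eq x 3(1,2) slot_mean_idle
      using 3 by (cases qsp) (simp_all add: idle_outcome_mean_def drain_step_def indicator_def)
    thus ?thesis using mult_left_mono[OF _ no_arrival] by (simp add: drain_prob_def)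
  next
    case 4
    have "pmf (S x) (drain_step x) = (1 - lp) * (1 - ls)"
      unfolding pmf_eq x 4 slot_mean_idle
      by (simp add: idle_outcome_mean_def drain_step_def indicator_def algebra_simps)
    thus ?thesis using mult_left_mono[OF _ no_arrival, of _ 1] fpd by (simp add: drain_prob_def)
  qed
qed

abbreviation "P t A \<equiv> measure_pmf.prob (D t) A"

definition expected_idle_slots :: "nat \<Rightarrow> real" where
  "expected_idle_slots n = (\<Sum>t<n. P t {y. Q_p y = 0})"

definition expected_Q_s_service_slots :: "nat \<Rightarrow> real" where
  "expected_Q_s_service_slots n = (\<Sum>t<n. P t {y. Q_p y = 0 \<and> 0 < Q_s y})"

definition expected_Q_sp_service_slots :: "nat \<Rightarrow> real" where
  "expected_Q_sp_service_slots n = (\<Sum>t<n. P t {y. Q_p y = 0 \<and> 0 < Q_sp y})"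

definition expected_empty_slots :: "nat \<Rightarrow> real" where
  "expected_empty_slots n = (\<Sum>t<n. P t {(0, 0, 0)})"

lemma uniform_tail_bound:
  assumes "queue_stable D Q_p" "queue_stable D Q_sp" "queue_stable D Q_s" "0 < \<epsilon>"
  shows "\<exists>K\<ge>1. \<forall>t. P t {y. K \<le> Q_p y} \<le> \<epsilon> \<and> P t {y. K \<le> Q_sp y} \<le> \<epsilon> \<and> P t {y. K \<le> Q_s y} \<le> \<epsilon>"
proof -
  obtain K\<^sub>1 K\<^sub>2 K\<^sub>3 where K: "1 \<le> K\<^sub>1"
    "\<forall>K'\<ge>K\<^sub>1. \<forall>t. P t {y. K' \<le> Q_p y} \<le> \<epsilon>" "\<forall>K'\<ge>K\<^sub>2. \<forall>t. P t {y. K' \<le> Q_sp y} \<le> \<epsilon>"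
    "\<forall>K'\<ge>K\<^sub>3. \<forall>t. P t {y. K' \<le> Q_s y} \<le> \<epsilon>"
    using assms tail_le_of_queue_stable by metis
  define K where "K = max K\<^sub>1 (max K\<^sub>2 K\<^sub>3)"
  have "K\<^sub>1 \<le> K" "K\<^sub>2 \<le> K" "K\<^sub>3 \<le> K" by (simp_all add: K_def)
  thus ?thesis using K by (intro exI[of _ K]) auto
qed

text \<open>Stability keeps the queues in a box with probability at least \<open>1/4\<close>, and from the box a
  fixed number of drain steps reaches the empty state.\<close>
lemma drain_to_empty_prob_ge:
  assumes "queue_stable D Q_p" "queue_stable D Q_sp" "queue_stable D Q_s"
  shows "\<exists>m. \<forall>t. 1/4 \<le> P t {x. (drain_step ^^ m) x \<in> {(0, 0, 0)}}"
proof -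
  obtain K where K: "\<forall>t. P t {y. K \<le> Q_p y} \<le> 1/4 \<and> P t {y. K \<le> Q_sp y} \<le> 1/4 \<and> P t {y. K \<le> Q_s y} \<le> 1/4"
    using uniform_tail_bound[OF assms, of "1/4"] by auto
  let ?box = "{y. Q_p y < K \<and> Q_sp y < K \<and> Q_s y < K}"
  have "1/4 \<le> P t {x. (drain_step ^^ (3 * K)) x \<in> {(0, 0, 0)}}" for t
  proof -
    have sub: "P t (A \<union> B) \<le> P t A + P t B" for A B
      by (rule measure_subadditive) (auto simp: measure_pmf.emeasure_eq_measure)
    have "P t (UNIV - ?box) \<le> P t ({y. K \<le> Q_p y} \<union> {y. K \<le> Q_sp y} \<union> {y. K \<le> Q_s y})"
      by (intro measure_pmf.finite_measure_mono) auto
    also have "\<dots> \<le> P t {y. K \<le> Q_p y} + P t {y. K \<le> Q_sp y} + P t {y. K \<le> Q_s y}"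
      using sub[of "{y. K \<le> Q_p y} \<union> {y. K \<le> Q_sp y}" "{y. K \<le> Q_s y}"]
        sub[of "{y. K \<le> Q_p y}" "{y. K \<le> Q_sp y}"] by linarith
    finally have "1/4 \<le> P t ?box"
      using spec[OF K, of t] measure_pmf.prob_compl[of ?box "D t"] by (simp add: Compl_eq_Diff_UNIV)
    also have "\<dots> \<le> P t {x. (drain_step ^^ (3 * K)) x \<in> {(0, 0, 0)}}"
      by (intro measure_pmf.finite_measure_mono)
         (auto simp: Q_p_def Q_sp_def Q_s_def intro!: drain_step_funpow_empty)
    finally show ?thesis .
  qed
  thus ?thesis by blast
qed

lemma empty_state_visits:
  assumes "queue_stable D Q_p" "queue_stable D Q_sp" "queue_stable D Q_s"
  shows "\<exists>m. \<forall>n. (real n - real m) * (drain_prob ^ m / 4) \<le> expected_empty_slots n"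
proof -
  obtain m where box: "\<And>t. 1/4 \<le> P t {x. (drain_step ^^ m) x \<in> {(0, 0, 0)}}"
    using drain_to_empty_prob_ge[OF assms] by blast
  let ?\<beta> = "drain_prob ^ m / 4"
  have visit: "?\<beta> \<le> P (t + m) {(0, 0, 0)}" for t
  proof -
    have "?\<beta> \<le> drain_prob ^ m * P t {x. (drain_step ^^ m) x \<in> {(0, 0, 0)}}"
      using mult_left_mono[OF box[of t], of "drain_prob ^ m"] drain_prob_nonneg by simp
    also have "\<dots> \<le> P (t + m) {(0, 0, 0)}"
      by (rule prob_iterate_lower_bound[where D=D, OF D_Suc drain_prob_nonneg pmf_slot_drain_step_ge])
    finally show ?thesis .
  qed
  have "(real n - real m) * ?\<beta> \<le> (\<Sum>t<n. P t {(0, 0, 0)})" for n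
  proof (cases "m \<le> n")
    case True
    have "(real n - real m) * ?\<beta> = (\<Sum>t\<in>{m..<n}. ?\<beta>)" using True by (simp add: of_nat_diff)
    also have "\<dots> \<le> (\<Sum>t\<in>{m..<n}. P t {(0, 0, 0)})"
    proof (rule sum_mono)
      fix t assume "t \<in> {m..<n}"
      thus "?\<beta> \<le> P t {(0, 0, 0)}" using visit[of "t - m"] by simp
    qed
    also have "\<dots> \<le> (\<Sum>t<n. P t {(0, 0, 0)})" by (intro sum_mono2) auto
    finally show ?thesis .
  next
    case False
    hence "(real n - real m) * ?\<beta> \<le> 0" using drain_prob_nonneg by (intro mult_nonpos_nonneg) auto
    also have "0 \<le> (\<Sum>t<n. P t {(0, 0, 0)})" by (intro sum_nonneg) simp
    finally show ?thesis .
  qed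
  thus ?thesis unfolding expected_empty_slots_def by blast
qed

lemma sum_expectation_le_of_truncated_drift:
  fixes q :: "qstate \<Rightarrow> nat" and r :: "qstate \<Rightarrow> real"
  assumes drift: "\<And>x. r x \<le> ES x (\<lambda>y. real (min (q y) K)) - real (min (q x) K)"
    and r_bdd: "\<And>y. \<bar>r y\<bar> \<le> B"
  shows "(\<Sum>t<n. measure_pmf.expectation (D t) r) \<le> K"
proof -
  let ?f = "\<lambda>y. real (min (q y) K)"
  have f_bdd: "\<bar>?f y\<bar> \<le> K" for y by simp
  have "measure_pmf.expectation (D 0) ?f + (\<Sum>t<n. measure_pmf.expectation (D t) r)
          \<le> measure_pmf.expectation (D n) ?f"
    by (rule dynkin_lower_bound[where D=D, OF D_Suc f_bdd r_bdd drift])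
  moreover have "0 \<le> measure_pmf.expectation (D 0) ?f" by (simp add: D_0)
  moreover have "measure_pmf.expectation (D n) ?f \<le> K"
    using expectation_abs_le[OF f_bdd] by (simp add: abs_le_iff)
  ultimately show ?thesis by linarith
qed

lemma Q_p_time_average:
  assumes "1 \<le> K" and tail: "\<And>t. P t {y. K \<le> Q_p y} \<le> \<epsilon>"
  shows "real n * (lp - lp * \<epsilon> - mu_p) + mu_p * expected_idle_slots n \<le> K"
proof -
  let ?r = "\<lambda>x. lp - mu_p * indicator {y. 0 < Q_p y} x - lp * indicator {y. K \<le> Q_p y} x"
  have "(\<Sum>t<n. (lp - lp * \<epsilon> - mu_p) + mu_p * P t {y. Q_p y = 0})
          \<le> (\<Sum>t<n. measure_pmf.expectation (D t) ?r)"
  proof (rule sum_mono)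
    fix t
    have "P t {y. 0 < Q_p y} = 1 - P t {y. Q_p y = 0}"
      using measure_pmf.prob_compl[of "{y. Q_p y = 0}" "D t"] by (simp add: Compl_eq_Diff_UNIV set_diff_eq)
    hence "measure_pmf.expectation (D t) ?r = lp - mu_p * (1 - P t {y. Q_p y = 0}) - lp * P t {y. K \<le> Q_p y}"
      by simp
    moreover have "lp * P t {y. K \<le> Q_p y} \<le> lp * \<epsilon>" using tail lp by (simp add: mult_left_mono)
    ultimately show "(lp - lp * \<epsilon> - mu_p) + mu_p * P t {y. Q_p y = 0} \<le> measure_pmf.expectation (D t) ?r"
      by (simp add: algebra_simps)
  qed
  also have "\<dots> \<le> K"
  proof (rule sum_expectation_le_of_truncated_drift)
    show "?r x \<le> ES x (\<lambda>y. real (min (Q_p y) K)) - real (min (Q_p x) K)" for x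
      by (rule truncated_Q_p_drift[OF assms(1)])
    show "\<bar>?r y\<bar> \<le> 2" for y using lp rates by (auto simp: abs_le_iff split: split_indicator)
  qed
  finally show ?thesis
    by (simp only: sum.distrib sum_distrib_left[symmetric] sum_constant card_lessThan
          expected_idle_slots_def expected_Q_s_service_slots_def expected_Q_sp_service_slots_def)
qed

lemma Q_s_time_average:
  assumes "1 \<le> K" and tail: "\<And>t. P t {y. K \<le> Q_s y} \<le> \<epsilon>"
  shows "real n * (ls - ls * \<epsilon>) + (- mu_s) * expected_Q_s_service_slots n \<le> K"
proof -
  let ?r = "\<lambda>x. ls - mu_s * indicator {y. Q_p y = 0 \<and> 0 < Q_s y} x - ls * indicator {y. K \<le> Q_s y} x"
  have "(\<Sum>t<n. (ls - ls * \<epsilon>) + (- mu_s) * P t {y. Q_p y = 0 \<and> 0 < Q_s y})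
          \<le> (\<Sum>t<n. measure_pmf.expectation (D t) ?r)"
  proof (rule sum_mono)
    fix t
    have "measure_pmf.expectation (D t) ?r
            = ls - mu_s * P t {y. Q_p y = 0 \<and> 0 < Q_s y} - ls * P t {y. K \<le> Q_s y}"
      by simp
    moreover have "ls * P t {y. K \<le> Q_s y} \<le> ls * \<epsilon>" using tail ls by (simp add: mult_left_mono)
    ultimately show "(ls - ls * \<epsilon>) + (- mu_s) * P t {y. Q_p y = 0 \<and> 0 < Q_s y}
                       \<le> measure_pmf.expectation (D t) ?r"
      by (simp add: algebra_simps)
  qed
  also have "\<dots> \<le> K"
  proof (rule sum_expectation_le_of_truncated_drift)
    show "?r x \<le> ES x (\<lambda>y. real (min (Q_s y) K)) - real (min (Q_s x) K)" for x
      by (rule truncated_Q_s_drift[OF assms(1)])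
    show "\<bar>?r y\<bar> \<le> 2" for y using ls rates by (auto simp: abs_le_iff split: split_indicator)
  qed
  finally show ?thesis
    by (simp only: sum.distrib sum_distrib_left[symmetric] sum_constant card_lessThan
          expected_idle_slots_def expected_Q_s_service_slots_def expected_Q_sp_service_slots_def)
qed

lemma Q_sp_time_average:
  assumes "1 \<le> K" and tail: "\<And>t. P t {y. K \<le> Q_sp y} \<le> \<epsilon>"
  shows "real n * (relay_in - relay_in * \<epsilon>) + (- relay_in) * expected_idle_slots n
           + (- relay_out) * expected_Q_sp_service_slots n \<le> K"
proof -
  let ?r = "\<lambda>x. relay_in - relay_in * indicator {y. Q_p y = 0} x
      - relay_out * indicator {y. Q_p y = 0 \<and> 0 < Q_sp y} x - relay_in * indicator {y. K \<le> Q_sp y} x"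
  have "(\<Sum>t<n. (relay_in - relay_in * \<epsilon>) + (- relay_in) * P t {y. Q_p y = 0}
                 + (- relay_out) * P t {y. Q_p y = 0 \<and> 0 < Q_sp y})
          \<le> (\<Sum>t<n. measure_pmf.expectation (D t) ?r)"
  proof (rule sum_mono)
    fix t
    have "measure_pmf.expectation (D t) ?r = relay_in - relay_in * P t {y. Q_p y = 0}
            - relay_out * P t {y. Q_p y = 0 \<and> 0 < Q_sp y} - relay_in * P t {y. K \<le> Q_sp y}"
      by simp
    moreover have "relay_in * P t {y. K \<le> Q_sp y} \<le> relay_in * \<epsilon>"
      using tail rates by (simp add: mult_left_mono)
    ultimately show "(relay_in - relay_in * \<epsilon>) + (- relay_in) * P t {y. Q_p y = 0}
                       + (- relay_out) * P t {y. Q_p y = 0 \<and> 0 < Q_sp y}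
                       \<le> measure_pmf.expectation (D t) ?r"
      by (simp add: algebra_simps)
  qed
  also have "\<dots> \<le> K"
  proof (rule sum_expectation_le_of_truncated_drift)
    show "?r x \<le> ES x (\<lambda>y. real (min (Q_sp y) K)) - real (min (Q_sp x) K)" for x
      by (rule truncated_Q_sp_drift[OF assms(1)])
    show "\<bar>?r y\<bar> \<le> 3" for y using rates by (auto simp: abs_le_iff split: split_indicator)
  qed
  finally show ?thesis
    by (simp only: sum.distrib sum_distrib_left[symmetric] sum_constant card_lessThan
          expected_idle_slots_def expected_Q_s_service_slots_def expected_Q_sp_service_slots_def)
qed

lemma prob_idle_ge:
  assumes "A \<subseteq> {y. Q_p y = 0}" "(0, 0, 0) \<notin> A"
  shows "P t A + P t {(0, 0, 0)} \<le> P t {y. Q_p y = 0}"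
proof -
  have "P t A + P t {(0, 0, 0)} = P t (A \<union> {(0, 0, 0)})"
    using assms(2) by (intro measure_pmf.finite_measure_Union[symmetric]) auto
  also have "\<dots> \<le> P t {y. Q_p y = 0}"
    using assms(1) by (intro measure_pmf.finite_measure_mono) (auto simp: Q_p_def)
  finally show ?thesis .
qed

lemma expected_service_slots_le:
  "expected_Q_s_service_slots n + expected_empty_slots n \<le> expected_idle_slots n"
  "expected_Q_sp_service_slots n + expected_empty_slots n \<le> expected_idle_slots n"
  unfolding expected_Q_s_service_slots_def expected_Q_sp_service_slots_def expected_empty_slots_def
    expected_idle_slots_def sum.distrib[symmetric]
  by (intro sum_mono prob_idle_ge; auto simp: Q_p_def Q_s_def Q_sp_def)+

text \<open>In the three rate inequalities, \<open>\<beta>\<close> bounds from below the long-run fraction of slots spent in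
  the empty state, and the time averages are combined so that the unknown fraction of idle slots
  cancels.\<close>
lemma Q_p_rate_inequality:
  assumes stable: "queue_stable D Q_p" "queue_stable D Q_sp" "queue_stable D Q_s"
    and visits: "\<And>n. (real n - real m) * \<beta> \<le> expected_empty_slots n" and "0 < \<epsilon>"
  shows "lp * (1 - \<epsilon>) \<le> mu_p * (1 - \<beta>)"
proof -
  obtain K where "1 \<le> K" and tail: "\<forall>t. P t {y. K \<le> Q_p y} \<le> \<epsilon>"
    using uniform_tail_bound[OF stable \<open>0 < \<epsilon>\<close>] by blast
  have "lp * (1 - \<epsilon>) - mu_p * (1 - \<beta>) \<le> 0"
  proof (rule nonpos_of_linear_bound)
    fix n
    have "0 \<le> expected_Q_s_service_slots n" by (simp add: expected_Q_s_service_slots_def sum_nonneg)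
    hence "(real n - real m) * \<beta> \<le> expected_idle_slots n"
      using visits[of n] expected_service_slots_le(1)[of n] by linarith
    hence "mu_p * ((real n - real m) * \<beta>) \<le> mu_p * expected_idle_slots n"
      using rates by (simp add: mult_left_mono)
    thus "real n * (lp * (1 - \<epsilon>) - mu_p * (1 - \<beta>)) \<le> K + mu_p * real m * \<beta>"
      using Q_p_time_average[OF \<open>1 \<le> K\<close>, of \<epsilon> n] tail by (simp add: algebra_simps)
  qed
  thus ?thesis by simp
qed

lemma Q_s_rate_inequality:
  assumes stable: "queue_stable D Q_p" "queue_stable D Q_sp" "queue_stable D Q_s"
    and visits: "\<And>n. (real n - real m) * \<beta> \<le> expected_empty_slots n" and "0 < \<epsilon>"
  shows "mu_p * ls * (1 - \<epsilon>) \<le> mu_s * (mu_p - lp * (1 - \<epsilon>) - mu_p * \<beta>)"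
proof -
  obtain K where "1 \<le> K" and tail: "\<forall>t. P t {y. K \<le> Q_p y} \<le> \<epsilon> \<and> P t {y. K \<le> Q_s y} \<le> \<epsilon>"
    using uniform_tail_bound[OF stable \<open>0 < \<epsilon>\<close>] by blast
  have "mu_p * ls * (1 - \<epsilon>) - mu_s * (mu_p - lp * (1 - \<epsilon>) - mu_p * \<beta>) \<le> 0"
  proof (rule nonpos_of_linear_bound)
    fix n
    have "mu_p * (real n * (ls - ls * \<epsilon>) + (- mu_s) * expected_Q_s_service_slots n) \<le> mu_p * K"
      using Q_s_time_average[OF \<open>1 \<le> K\<close>, of \<epsilon> n] tail rates by (intro mult_left_mono) auto
    moreover have "mu_s * (real n * (lp - lp * \<epsilon> - mu_p) + mu_p * expected_idle_slots n) \<le> mu_s * K"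
      using Q_p_time_average[OF \<open>1 \<le> K\<close>, of \<epsilon> n] tail rates by (intro mult_left_mono) auto
    moreover have "(mu_s * mu_p) * ((real n - real m) * \<beta>)
                     \<le> (mu_s * mu_p) * (expected_idle_slots n - expected_Q_s_service_slots n)"
      using visits[of n] expected_service_slots_le(1)[of n] rates by (intro mult_left_mono) auto
    ultimately show "real n * (mu_p * ls * (1 - \<epsilon>) - mu_s * (mu_p - lp * (1 - \<epsilon>) - mu_p * \<beta>))
                       \<le> mu_p * K + mu_s * K + mu_s * mu_p * real m * \<beta>"
      by (simp add: algebra_simps)
  qed
  thus ?thesis by simp
qed

lemma Q_sp_rate_inequality:
  assumes stable: "queue_stable D Q_p" "queue_stable D Q_sp" "queue_stable D Q_s"
    and visits: "\<And>n. (real n - real m) * \<beta> \<le> expected_empty_slots n" and "0 < \<epsilon>"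
  shows "mu_p * relay_in * (1 - \<epsilon>)
           \<le> (relay_in + relay_out) * (mu_p - lp * (1 - \<epsilon>)) - mu_p * relay_out * \<beta>"
proof -
  obtain K where "1 \<le> K" and tail: "\<forall>t. P t {y. K \<le> Q_p y} \<le> \<epsilon> \<and> P t {y. K \<le> Q_sp y} \<le> \<epsilon>"
    using uniform_tail_bound[OF stable \<open>0 < \<epsilon>\<close>] by blast
  have "mu_p * relay_in * (1 - \<epsilon>)
          - ((relay_in + relay_out) * (mu_p - lp * (1 - \<epsilon>)) - mu_p * relay_out * \<beta>) \<le> 0"
  proof (rule nonpos_of_linear_bound)
    fix n
    have "mu_p * (real n * (relay_in - relay_in * \<epsilon>) + (- relay_in) * expected_idle_slots n
                  + (- relay_out) * expected_Q_sp_service_slots n) \<le> mu_p * K"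
      using Q_sp_time_average[OF \<open>1 \<le> K\<close>, of \<epsilon> n] tail rates by (intro mult_left_mono) auto
    moreover have "(relay_in + relay_out) * (real n * (lp - lp * \<epsilon> - mu_p) + mu_p * expected_idle_slots n)
                     \<le> (relay_in + relay_out) * K"
      using Q_p_time_average[OF \<open>1 \<le> K\<close>, of \<epsilon> n] tail rates by (intro mult_left_mono) auto
    moreover have "(mu_p * relay_out) * ((real n - real m) * \<beta>)
                     \<le> (mu_p * relay_out) * (expected_idle_slots n - expected_Q_sp_service_slots n)"
      using visits[of n] expected_service_slots_le(2)[of n] rates by (intro mult_left_mono) auto
    ultimately show "real n * (mu_p * relay_in * (1 - \<epsilon>)
                        - ((relay_in + relay_out) * (mu_p - lp * (1 - \<epsilon>)) - mu_p * relay_out * \<beta>))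
                       \<le> mu_p * K + (relay_in + relay_out) * K + mu_p * relay_out * real m * \<beta>"
      by (simp add: algebra_simps)
  qed
  thus ?thesis by simp
qed

lemma in_region_if_stable:
  assumes "queue_stable D Q_p" "queue_stable D Q_sp" "queue_stable D Q_s"
  shows "ls * mu_p < mu_s * (mu_p - lp) \<and> lp * (relay_in + relay_out) < relay_out * mu_p"
proof -
  obtain m where visits: "\<And>n. (real n - real m) * (drain_prob ^ m / 4) \<le> expected_empty_slots n"
    using empty_state_visits[OF assms] by blast
  define \<beta> where "\<beta> = drain_prob ^ m / 4"
  have "0 \<le> \<beta>" using drain_prob_nonneg by (simp add: \<beta>_def)
  note visits = visits[folded \<beta>_def]
  have p: "lp \<le> mu_p * (1 - \<beta>)"
    by (rule le_of_le_plus_small_multiple[where u=lp])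
       (use Q_p_rate_inequality[OF assms visits] in \<open>simp add: algebra_simps\<close>)
  have s: "mu_p * ls \<le> mu_s * (mu_p - lp - mu_p * \<beta>)"
    by (rule le_of_le_plus_small_multiple[where u="mu_p * ls + mu_s * lp"])
       (use Q_s_rate_inequality[OF assms visits] in \<open>simp add: algebra_simps\<close>)
  have sp: "mu_p * relay_in \<le> (relay_in + relay_out) * (mu_p - lp) - mu_p * relay_out * \<beta>"
    by (rule le_of_le_plus_small_multiple[where u="mu_p * relay_in + (relay_in + relay_out) * lp"])
       (use Q_sp_rate_inequality[OF assms visits] in \<open>simp add: algebra_simps\<close>)
  have "lp < 1" using p rates \<open>0 \<le> \<beta>\<close> mult_nonneg_nonneg[of mu_p \<beta>] by (simp add: algebra_simps)
  moreover have "ls < 1"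
  proof -
    have "mu_p - lp - mu_p * \<beta> \<le> mu_p" using lp mult_nonneg_nonneg[OF _ \<open>0 \<le> \<beta>\<close>, of mu_p] rates
      by linarith
    hence "mu_s * (mu_p - lp - mu_p * \<beta>) \<le> mu_s * mu_p" using rates by (intro mult_left_mono) auto
    hence "mu_p * ls \<le> mu_p * mu_s" using s by (simp only: mult.commute[of mu_s mu_p])
    hence "ls \<le> mu_s" using mult_le_cancel_left_pos[OF rates(1)] by blast
    thus ?thesis using rates by linarith
  qed
  ultimately have "0 < \<beta>" using drain_prob_pos by (simp add: \<beta>_def)
  hence "0 < mu_s * mu_p * \<beta>" "0 < mu_p * relay_out * \<beta>" using rates by simp_all
  thus ?thesis using s sp by (simp_all add: algebra_simps)
qed

lemma stab_region_iff:
  "(lp, ls) \<in> stab_region fpd fsd fps pq pa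
     \<longleftrightarrow> ls * mu_p < mu_s * (mu_p - lp) \<and> lp * (relay_in + relay_out) < relay_out * mu_p"
proof -
  have "pq * fsd * (1 - lp / mu_p) = mu_s * (mu_p - lp) / mu_p" using rates by (simp add: field_simps)
  hence "ls < pq * fsd * (1 - lp / mu_p) \<longleftrightarrow> ls * mu_p < mu_s * (mu_p - lp)"
    using rates by (simp add: pos_less_divide_eq)
  moreover have "fsd * (1 - pq) * mu_p / (fsd * (1 - pq) + relay_in) = relay_out * mu_p / (relay_in + relay_out)"
    by (simp add: algebra_simps)
  hence "lp < fsd * (1 - pq) * mu_p / (fsd * (1 - pq) + relay_in)
           \<longleftrightarrow> lp * (relay_in + relay_out) < relay_out * mu_p"
    using rates by (simp add: pos_less_divide_eq add_nonneg_pos)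
  ultimately show ?thesis unfolding stab_region_def by simp
qed

end

theorem theorem1:
  fixes lp ls fpd fsd fps pq pa :: real
  assumes "0 < fpd" "fpd < 1" "0 < fsd" "fsd < 1" "0 < fps" "fps < 1"
    and "fpd < fsd"
    and "0 < pq" "pq < 1" "0 \<le> pa" "pa \<le> 1"
    and "0 \<le> lp" "lp \<le> 1" "0 \<le> ls" "ls \<le> 1"
  shows "(queue_stable (state_dist lp ls fpd fsd fps pq pa) Q_p \<and>
          queue_stable (state_dist lp ls fpd fsd fps pq pa) Q_sp \<and>
          queue_stable (state_dist lp ls fpd fsd fps pq pa) Q_s)
         \<longleftrightarrow> (lp, ls) \<in> stab_region fpd fsd fps pq pa"
proof -
  interpret cognitive_radio lp ls fpd fsd fps pq pa
    using assms by unfold_locales auto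
  show ?thesis using stab_region_iff stable_if_in_region in_region_if_stable by blast
qed

end
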